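(* For integers $r,k\ge0$ and real $\alpha$ with $\alpha>k>r$, writing $C_\beta:=H_\beta^3+3H_\beta H_\beta^{(2)}+2H_\beta^{(3)}$ and $Q_\beta:=H_\beta^4+6H_\beta^2H_\beta^{(2)}+8H_\beta H_\beta^{(3)}+3\big(H_\beta^{(2)}\big)^2+6H_\beta^{(4)}$, $$\sum_{n=1}^\infty\frac{C_{n+\alpha}}{(n+r)(n+k)}=\frac{k-\alpha}{k-r}\left\{\frac{Q_{\alpha-k}}{\alpha-k}-\sum_{j=1}^k\frac{C_{\alpha+j-k}}{j(\alpha+j-k)}\right\}+\frac{\alpha-r}{k-r}\left\{\frac{Q_{\alpha-r}}{\alpha-r}-\sum_{j=1}^r\frac{C_{\alpha+j-r}}{j(\alpha+j-r)}\right\}.$$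
   Context: Shifted harmonic numbers: for a real $\alpha$ that is not a negative integer, $H_\alpha := \sum_{k=1}^\infty\left(\frac1k-\frac1{k+\alpha}\right)$ and, for integers $m\ge 2$, $H_\alpha^{(m)} := \sum_{k=1}^\infty\left(\frac1{k^m}-\frac1{(k+\alpha)^m}\right)=\zeta(m)-\zeta(m,\alpha+1)$, where $\zeta$ is the Riemann zeta function and $\zeta(s,\alpha+1)=\sum_{n=1}^\infty (n+\alpha)^{-s}$ is the Hurwitz zeta function. Powers such as $H_\alpha^2$ mean $(H_\alpha)^2$. Empty sums are $0$. *)

theory Defs
  imports "HOL-Analysis.Analysis"
begin

definition shH :: "real \<Rightarrow> real" where
  "shH a = (\<Sum>k. 1 / real (Suc k) - 1 / (real (Suc k) + a))"

definition shHm :: "nat \<Rightarrow> real \<Rightarrow> real" where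
  "shHm m a = (\<Sum>k. 1 / real (Suc k) ^ m - 1 / (real (Suc k) + a) ^ m)"

definition Cfun :: "real \<Rightarrow> real" where
  "Cfun b = shH b ^ 3 + 3 * shH b * shHm 2 b + 2 * shHm 3 b"

definition Qfun :: "real \<Rightarrow> real" where
  "Qfun b = shH b ^ 4 + 6 * shH b ^ 2 * shHm 2 b + 8 * shH b * shHm 3 b
            + 3 * (shHm 2 b) ^ 2 + 6 * shHm 4 b"

end

theory Submission
  imports Defs "HOL-Real_Asymp.Real_Asymp"
begin

text \<open>
  For \<open>g > 0\<close> and \<open>y\<^sub>i = 1 / (g + i)\<close> the core is the identity
  \<open>\<Sum>\<^sub>n\<^sub>\<ge>\<^sub>1 g / (n (n + g)) h\<^sub>e(y\<^sub>1, \<dots>, y\<^sub>n) = H\<^sub>g\<^sup>(\<^sup>e\<^sup>+\<^sup>1\<^sup>)\<close>, with \<open>h\<^sub>e\<close> the complete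
  homogeneous symmetric polynomial of degree \<open>e\<close>. Both sides are totals of the nonnegative
  double array \<open>v(m, n) = \<rho>\<^sub>m(n) y\<^sup>m\<^sub>n\<^sub>+\<^sub>1 h\<^sub>e(y\<^sup>m\<^sub>1, \<dots>, y\<^sup>m\<^sub>n\<^sub>+\<^sub>1)\<close>, where
  \<open>y\<^sup>m\<^sub>i = 1 / (g + m + i)\<close> and \<open>\<rho>\<^sub>m(n) = (g)\<^sub>n / (g + m + 1)\<^sub>n\<close>. With
  \<open>u(m, n) = \<rho>\<^sub>m(n) h\<^sub>e(y\<^sup>m\<^sub>1, \<dots>, y\<^sup>m\<^sub>n)\<close>, row \<open>m\<close> telescopes in \<open>n\<close> (by induction on
  \<open>e\<close>) to the \<open>m\<close>-th term of \<open>H\<^sub>g\<^sup>(\<^sup>e\<^sup>+\<^sup>1\<^sup>)\<close>, and column \<open>n\<close> telescopes in \<open>m\<close> to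
  \<open>u(0, n + 1) / (n + 1)\<close>, the \<open>n\<close>-th term on the left.

  Since \<open>H\<^sub>g\<^sub>+\<^sub>n\<^sup>(\<^sup>j\<^sup>) = H\<^sub>g\<^sup>(\<^sup>j\<^sup>) + \<Sum>\<^sub>i\<^sub>\<le>\<^sub>n y\<^sub>i\<^sup>j\<close>, Newton's identities turn \<open>C\<^sub>g\<^sub>+\<^sub>n\<close>
  into a combination of \<open>h\<^sub>0, \<dots>, h\<^sub>3\<close> with coefficients built from the \<open>H\<^sub>g\<^sup>(\<^sup>j\<^sup>)\<close>,
  and the core identity gives \<open>\<Sum>\<^sub>n\<^sub>\<ge>\<^sub>1 C\<^sub>g\<^sub>+\<^sub>n / (n (n + g)) = Q\<^sub>g / g\<close>. For
  \<open>g = \<alpha> - s\<close> with \<open>s \<in> {r, k}\<close>, shifting the index by \<open>s\<close> and the partial fraction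
  \<open>1 / ((n + r) (n + k)) = ((k - \<alpha>) / (n + k) + (\<alpha> - r) / (n + r)) / ((k - r) (n + \<alpha>))\<close>
  give the theorem.
\<close>

section \<open>Complete homogeneous symmetric polynomials\<close>

text \<open>\<open>complete_hom x e n = h\<^sub>e(x 1, \<dots>, x n)\<close>; the last equation splits off the monomials
  containing \<open>x (Suc n)\<close>.\<close>
fun complete_hom :: "(nat \<Rightarrow> real) \<Rightarrow> nat \<Rightarrow> nat \<Rightarrow> real" where
  "complete_hom x 0 n = 1"
| "complete_hom x (Suc e) 0 = 0"
| "complete_hom x (Suc e) (Suc n) = complete_hom x (Suc e) n + x (Suc n) * complete_hom x e (Suc n)"

definition power_sum :: "(nat \<Rightarrow> real) \<Rightarrow> nat \<Rightarrow> nat \<Rightarrow> real" where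
  "power_sum x j n = (\<Sum>i=1..n. x i ^ j)"

lemma power_sum_0 [simp]: "power_sum x j 0 = 0"
  by (simp add: power_sum_def)

lemma power_sum_Suc [simp]: "power_sum x j (Suc n) = power_sum x j n + x (Suc n) ^ j"
  by (simp add: power_sum_def)

lemma power_sum_nonneg: "(\<And>i. x i \<ge> 0) \<Longrightarrow> power_sum x j n \<ge> 0"
  by (simp add: power_sum_def sum_nonneg)

lemma complete_hom_single_var: "complete_hom x e (Suc 0) = x 1 ^ e"
  by (induction e) auto

lemma complete_hom_drop_first:
  "complete_hom x (Suc e) (Suc n)
     = complete_hom (\<lambda>i. x (Suc i)) (Suc e) n + x 1 * complete_hom x e (Suc n)"
proof (induction n arbitrary: e)
  case 0
  show ?case by (simp add: complete_hom_single_var)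
next
  case (Suc n)
  note drop_at_n = Suc.IH
  let ?y = "\<lambda>i. x (Suc i)"
  show ?case
  proof (induction e)
    case 0
    then show ?case using drop_at_n[of 0] by simp
  next
    case (Suc e)
    have "complete_hom x (Suc (Suc e)) (Suc (Suc n))
        = complete_hom x (Suc (Suc e)) (Suc n) + x (Suc (Suc n)) * complete_hom x (Suc e) (Suc (Suc n))"
      by simp
    also have "\<dots> = (complete_hom ?y (Suc (Suc e)) n + x 1 * complete_hom x (Suc e) (Suc n))
        + x (Suc (Suc n)) * (complete_hom ?y (Suc e) (Suc n) + x 1 * complete_hom x e (Suc (Suc n)))"
      by (simp only: drop_at_n Suc.IH)
    also have "\<dots> = complete_hom ?y (Suc (Suc e)) (Suc n) + x 1 * complete_hom x (Suc e) (Suc (Suc n))"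
      by (simp add: algebra_simps)
    finally show ?case .
  qed
qed

lemma complete_hom_nonneg: "(\<And>i. x i \<ge> 0) \<Longrightarrow> complete_hom x e n \<ge> 0"
  by (induction x e n rule: complete_hom.induct) simp_all

lemma complete_hom_le_power_sum:
  "(\<And>i. x i \<ge> 0) \<Longrightarrow> complete_hom x e n \<le> power_sum x 1 n ^ e"
proof (induction x e n rule: complete_hom.induct)
  case (3 x e n)
  let ?p = "power_sum x 1"
  have p: "0 \<le> ?p n" "?p n \<le> ?p (Suc n)" using 3 by (auto intro: power_sum_nonneg)
  have "complete_hom x (Suc e) (Suc n) = complete_hom x (Suc e) n + x (Suc n) * complete_hom x e (Suc n)"
    by simp
  also have "\<dots> \<le> ?p n * ?p (Suc n) ^ e + x (Suc n) * ?p (Suc n) ^ e"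
  proof -
    have "?p n ^ Suc e \<le> ?p n * ?p (Suc n) ^ e"
      unfolding power_Suc using p by (intro mult_left_mono power_mono) auto
    then show ?thesis using 3 by (intro add_mono mult_left_mono) auto
  qed
  also have "\<dots> = ?p (Suc n) ^ Suc e" by (simp add: algebra_simps)
  finally show ?case .
qed simp_all

lemma complete_hom_1: "complete_hom x 1 n = power_sum x 1 n"
  by (induction n) auto

lemma complete_hom_2: "complete_hom x 2 n = (power_sum x 1 n ^ 2 + power_sum x 2 n) / 2"
proof (induction n)
  case (Suc n)
  have "complete_hom x 2 (Suc n) = complete_hom x 2 n + x (Suc n) * complete_hom x 1 (Suc n)"
    by (simp add: numeral_2_eq_2)
  also have "\<dots> = (power_sum x 1 n ^ 2 + power_sum x 2 n) / 2 + x (Suc n) * power_sum x 1 (Suc n)"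
    by (simp only: Suc.IH complete_hom_1)
  also have "\<dots> = (power_sum x 1 (Suc n) ^ 2 + power_sum x 2 (Suc n)) / 2"
    by (simp add: field_simps power2_eq_square)
  finally show ?case .
qed (simp add: numeral_2_eq_2)

lemma complete_hom_3:
  "complete_hom x 3 n
     = (power_sum x 1 n ^ 3 + 3 * power_sum x 1 n * power_sum x 2 n + 2 * power_sum x 3 n) / 6"
proof (induction n)
  case (Suc n)
  let ?p = "power_sum x"
  have "complete_hom x 3 (Suc n) = complete_hom x 3 n + x (Suc n) * complete_hom x 2 (Suc n)"
    by (simp add: numeral_3_eq_3 numeral_2_eq_2)
  also have "\<dots> = (?p 1 n ^ 3 + 3 * ?p 1 n * ?p 2 n + 2 * ?p 3 n) / 6
      + x (Suc n) * ((?p 1 (Suc n) ^ 2 + ?p 2 (Suc n)) / 2)"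
    by (simp only: Suc.IH complete_hom_2)
  also have "\<dots> = (?p 1 (Suc n) ^ 3 + 3 * ?p 1 (Suc n) * ?p 2 (Suc n) + 2 * ?p 3 (Suc n)) / 6"
    by (simp add: field_simps power2_eq_square power3_eq_cube)
  finally show ?case .
qed (simp add: numeral_3_eq_3)

section \<open>The double array\<close>

definition shifted_recip :: "real \<Rightarrow> nat \<Rightarrow> nat \<Rightarrow> real" where
  "shifted_recip g m i = 1 / (g + real m + real i)"

definition poch_ratio :: "real \<Rightarrow> nat \<Rightarrow> nat \<Rightarrow> real" where
  "poch_ratio g m n = pochhammer g n / pochhammer (g + real m + 1) n"

definition u_seq :: "real \<Rightarrow> nat \<Rightarrow> nat \<Rightarrow> nat \<Rightarrow> real" where
  "u_seq g m e n = poch_ratio g m n * complete_hom (shifted_recip g m) e n"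

definition v_seq :: "real \<Rightarrow> nat \<Rightarrow> nat \<Rightarrow> nat \<Rightarrow> real" where
  "v_seq g m e n
     = poch_ratio g m n * shifted_recip g m (Suc n) * complete_hom (shifted_recip g m) e (Suc n)"

lemma shifted_recip_Suc: "shifted_recip g m (Suc i) = shifted_recip g (Suc m) i"
  by (simp add: shifted_recip_def add_ac)

lemma shifted_recip_pos: "g > 0 \<Longrightarrow> shifted_recip g m i > 0"
  by (simp add: shifted_recip_def add_pos_nonneg)

lemma poch_ratio_0 [simp]: "poch_ratio g m 0 = 1"
  by (simp add: poch_ratio_def)

lemma poch_ratio_Suc:
  "poch_ratio g m (Suc n) = poch_ratio g m n * ((g + real n) / (g + real m + real (Suc n)))"
  by (simp add: poch_ratio_def pochhammer_Suc add_ac)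

lemma poch_ratio_nonneg: "g > 0 \<Longrightarrow> poch_ratio g m n \<ge> 0"
  by (simp add: poch_ratio_def pochhammer_pos add_pos_nonneg less_imp_le)

lemma poch_ratio_left_0:
  assumes "g > 0"
  shows "poch_ratio g 0 n = g / (g + real n)"
proof -
  have "pochhammer g n * (g + real n) = g * pochhammer (g + 1) n"
    using pochhammer_Suc[of g n] pochhammer_rec[of g n] by simp
  moreover have "pochhammer (g + 1) n > 0" "g + real n > 0"
    using assms by (auto intro: pochhammer_pos)
  ultimately show ?thesis by (simp add: poch_ratio_def field_simps)
qed

lemma poch_ratio_Suc_left:
  assumes "g > 0"
  shows "poch_ratio g (Suc m) n
    = poch_ratio g m n * ((g + real m + 1) / (g + real m + 1 + real n))"
proof -
  define c where "c = g + real m + 1"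
  have "c > 0" using assms by (simp add: c_def add_pos_nonneg)
  have "pochhammer c n * (c + real n) = c * pochhammer (c + 1) n"
    using pochhammer_Suc[of c n] pochhammer_rec[of c n] by simp
  moreover have "pochhammer c n > 0" "pochhammer (c + 1) n > 0" "c + real n > 0"
    using \<open>c > 0\<close> by (auto intro: pochhammer_pos)
  ultimately have "pochhammer g n / pochhammer (c + 1) n
      = pochhammer g n / pochhammer c n * (c / (c + real n))"
    using \<open>c > 0\<close> by (simp add: field_simps)
  then show ?thesis by (simp add: poch_ratio_def c_def add_ac)
qed

lemma poch_ratio_le: "g > 0 \<Longrightarrow> poch_ratio g m n \<le> g / (g + real n)"
proof (induction n)
  case (Suc n)
  have "poch_ratio g m (Suc n) = poch_ratio g m n * ((g + real n) / (g + real m + real (Suc n)))"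
    by (rule poch_ratio_Suc)
  also have "\<dots> \<le> g / (g + real n) * ((g + real n) / (g + real (Suc n)))"
    using Suc poch_ratio_nonneg[OF Suc.prems]
    by (intro mult_mono divide_left_mono) (auto simp: add_pos_nonneg)
  also have "\<dots> = g / (g + real (Suc n))" using Suc.prems by simp
  finally show ?case .
qed simp

lemma poch_ratio_le_first:
  assumes "g > 0" "n \<ge> 1"
  shows "poch_ratio g m n \<le> g / (g + real m + 1)"
  using assms(2)
proof (induction n rule: dec_induct)
  case base
  then show ?case by (simp add: poch_ratio_def add_ac)
next
  case (step n)
  have "poch_ratio g m (Suc n) = poch_ratio g m n * ((g + real n) / (g + real m + real (Suc n)))"
    by (rule poch_ratio_Suc)
  also have "\<dots> \<le> poch_ratio g m n"
    using poch_ratio_nonneg[OF assms(1)] assms(1)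
    by (intro mult_left_le) (auto simp: field_simps add_pos_nonneg)
  finally show ?case using step by simp
qed

lemma u_seq_at_1: "u_seq g m e (Suc 0) = g * shifted_recip g m (Suc 0) ^ Suc e"
  by (simp add: u_seq_def poch_ratio_def complete_hom_single_var shifted_recip_def add_ac)

lemma u_seq_0_diff_Suc:
  assumes "g > 0"
  shows "u_seq g m 0 n - u_seq g m 0 (Suc n) = (real m + 1) * v_seq g m 0 n"
proof -
  have "g + real m + real n + 1 \<noteq> 0" using assms by (simp add: add_pos_nonneg)
  then show ?thesis
    by (simp add: u_seq_def v_seq_def shifted_recip_def poch_ratio_Suc field_simps)
qed

lemma u_seq_Suc_diff_Suc:
  assumes "g > 0"
  shows "u_seq g m (Suc e) n - u_seq g m (Suc e) (Suc n)
    = (real m + 1) * v_seq g m (Suc e) n - v_seq g m e n"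
proof -
  have "g + real m + real n + 1 \<noteq> 0" using assms by (simp add: add_pos_nonneg)
  moreover have h: "complete_hom (shifted_recip g m) (Suc e) n
      = complete_hom (shifted_recip g m) (Suc e) (Suc n)
        - shifted_recip g m (Suc n) * complete_hom (shifted_recip g m) e (Suc n)"
    by simp
  ultimately show ?thesis
    unfolding u_seq_def v_seq_def h
    by (simp add: shifted_recip_def poch_ratio_Suc field_simps del: complete_hom.simps)
qed

lemma u_seq_0_diff_Suc_shift:
  assumes "g > 0"
  shows "u_seq g m 0 n - u_seq g (Suc m) 0 n = real n * v_seq g m 0 n"
proof -
  have "g + real m + real n + 1 \<noteq> 0" using assms by (simp add: add_pos_nonneg)
  then show ?thesis
    by (simp add: u_seq_def v_seq_def shifted_recip_def poch_ratio_Suc_left[OF assms] field_simps)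
qed

lemma u_seq_Suc_diff_Suc_shift:
  assumes "g > 0"
  shows "u_seq g m (Suc e) n - u_seq g (Suc m) (Suc e) n = real n * v_seq g m (Suc e) n"
proof -
  define c where "c = g + real m + 1"
  define Y where "Y = shifted_recip g m (Suc n)"
  define R where "R = poch_ratio g m n"
  let ?h = "complete_hom (shifted_recip g m)" and ?h' = "complete_hom (shifted_recip g (Suc m))"
  have "c > 0" using assms by (simp add: c_def add_pos_nonneg)
  have Y_eq: "Y = 1 / (c + real n)"
    by (simp add: Y_def c_def shifted_recip_def add_ac)
  have Y: "Y * (c + real n) = 1"
    using \<open>c > 0\<close> by (simp add: Y_eq)
  have y1: "shifted_recip g m 1 * c = 1"
    using \<open>c > 0\<close> by (simp add: shifted_recip_def c_def add_ac)
  have h: "?h (Suc e) n = ?h (Suc e) (Suc n) - Y * ?h e (Suc n)"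
    by (simp add: Y_def)
  have h': "?h' (Suc e) n = ?h (Suc e) (Suc n) - shifted_recip g m 1 * ?h e (Suc n)"
    using complete_hom_drop_first[of "shifted_recip g m" e n] by (simp add: shifted_recip_Suc)
  have R': "poch_ratio g (Suc m) n = R * c * Y"
    using poch_ratio_Suc_left[OF assms, of m n, folded c_def] by (simp add: R_def Y_eq)
  have "u_seq g m (Suc e) n - u_seq g (Suc m) (Suc e) n
      = R * ?h (Suc e) (Suc n) * (1 - c * Y) - R * Y * ?h e (Suc n) * (1 - shifted_recip g m 1 * c)"
    unfolding u_seq_def h h' R' R_def by (simp add: algebra_simps del: complete_hom.simps)
  moreover have "1 - c * Y = real n * Y" using Y by (simp add: algebra_simps)
  moreover have "1 - shifted_recip g m 1 * c = 0" using y1 by simp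
  ultimately show ?thesis by (simp add: v_seq_def R_def Y_def del: complete_hom.simps)
qed

lemma u_seq_diff_Suc_shift:
  "g > 0 \<Longrightarrow> u_seq g m e n - u_seq g (Suc m) e n = real n * v_seq g m e n"
  by (cases e) (simp_all add: u_seq_0_diff_Suc_shift u_seq_Suc_diff_Suc_shift)

lemma u_seq_nonneg: "g > 0 \<Longrightarrow> u_seq g m e n \<ge> 0"
  by (simp add: u_seq_def poch_ratio_nonneg complete_hom_nonneg shifted_recip_pos less_imp_le)

lemma v_seq_nonneg: "g > 0 \<Longrightarrow> v_seq g m e n \<ge> 0"
  by (simp add: v_seq_def poch_ratio_nonneg complete_hom_nonneg shifted_recip_pos less_imp_le)

lemma harm_le_1_plus_ln: "n \<ge> 1 \<Longrightarrow> harm n \<le> 1 + ln (real n)"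
  using euler_mascheroni_sequence_decreasing[of 1 n] by (simp add: harm_def)

lemma complete_hom_shifted_recip_le_harm:
  assumes "g > 0"
  shows "complete_hom (shifted_recip g m) e n \<le> harm n ^ e"
proof -
  have pos: "\<And>i. shifted_recip g m i \<ge> 0" using shifted_recip_pos[OF assms] less_imp_le by blast
  have "power_sum (shifted_recip g m) 1 n \<le> harm n"
    unfolding power_sum_def harm_def
  proof (intro sum_mono)
    fix i assume "i \<in> {1..n}"
    then show "shifted_recip g m i ^ 1 \<le> inverse (real i)"
      using assms by (auto simp: shifted_recip_def inverse_eq_divide intro!: divide_left_mono add_pos_nonneg)
  qed
  then show ?thesis
    using complete_hom_le_power_sum[OF pos] power_sum_nonneg[OF pos]
    by (meson order_trans power_mono)
qed

lemma u_seq_tendsto_0: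
  assumes "g > 0"
  shows "(\<lambda>n. u_seq g m e n) \<longlonglongrightarrow> 0"
proof (rule tendsto_sandwich[of "\<lambda>_. 0" _ _ "\<lambda>n. g / (g + real n) * (1 + ln (real n)) ^ e"])
  show "\<forall>\<^sub>F n in sequentially. u_seq g m e n \<le> g / (g + real n) * (1 + ln (real n)) ^ e"
  proof (rule eventually_sequentiallyI[of 1])
    fix n :: nat assume "n \<ge> 1"
    then have "complete_hom (shifted_recip g m) e n \<le> (1 + ln (real n)) ^ e"
      using complete_hom_shifted_recip_le_harm[OF assms] harm_le_1_plus_ln harm_nonneg
      by (meson order_trans power_mono)
    then show "u_seq g m e n \<le> g / (g + real n) * (1 + ln (real n)) ^ e"
      unfolding u_seq_def using poch_ratio_le[OF assms] assms
      by (intro mult_mono) (auto intro: complete_hom_nonneg less_imp_le shifted_recip_pos)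
  qed
  show "(\<lambda>n. g / (g + real n) * (1 + ln (real n)) ^ e) \<longlonglongrightarrow> 0"
    using assms by real_asymp
qed (use u_seq_nonneg[OF assms] in auto)

lemma u_seq_tendsto_0_shift:
  assumes "g > 0" "n \<ge> 1"
  shows "(\<lambda>m. u_seq g m e n) \<longlonglongrightarrow> 0"
proof (rule tendsto_sandwich[of "\<lambda>_. 0" _ _ "\<lambda>m. g / (g + real m + 1) * harm n ^ e"])
  show "\<forall>\<^sub>F m in sequentially. u_seq g m e n \<le> g / (g + real m + 1) * harm n ^ e"
    unfolding u_seq_def using poch_ratio_le_first[OF assms] complete_hom_shifted_recip_le_harm assms
    by (intro always_eventually allI mult_mono)
      (auto intro: complete_hom_nonneg less_imp_le shifted_recip_pos)
  show "(\<lambda>m. g / (g + real m + 1) * harm n ^ e) \<longlonglongrightarrow> 0"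
    using assms(1) by real_asymp
qed (use u_seq_nonneg[OF assms(1)] in auto)

lemma u_seq_telescope_sums:
  assumes "g > 0"
  shows "(\<lambda>n. u_seq g m e (Suc n) - u_seq g m e (Suc (Suc n))) sums u_seq g m e (Suc 0)"
  using telescope_sums'[OF LIMSEQ_Suc[OF u_seq_tendsto_0[OF assms]]] by simp

section \<open>Row and column sums\<close>

definition shHm_term :: "nat \<Rightarrow> real \<Rightarrow> nat \<Rightarrow> real" where
  "shHm_term j a k = 1 / real (Suc k) ^ j - 1 / (real (Suc k) + a) ^ j"

lemma shHm_eq_suminf: "shHm j a = (\<Sum>k. shHm_term j a k)"
  by (simp add: shHm_def shHm_term_def)

lemma shH_eq_shHm_1: "shH a = shHm 1 a"
  by (simp add: shH_def shHm_def)

lemma summable_shHm_term: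
  assumes "a \<ge> 0"
  shows "summable (shHm_term j a)"
proof (rule summable_comparison_test')
  show "summable (\<lambda>k. real j * a * (1 / (real k + 1) ^ 2))"
    using inverse_squares_sums by (intro summable_mult) (simp add: sums_iff add.commute)
  fix k :: nat
  let ?z = "1 / real (Suc k)" and ?w = "1 / (real (Suc k) + a)"
  have "norm (shHm_term j a k) = norm (?z ^ j - ?w ^ j)"
    by (simp add: shHm_term_def power_one_over)
  also have "\<dots> \<le> real j * norm (?z - ?w)"
    using assms by (intro norm_power_diff) auto
  also have "norm (?z - ?w) = a / (real (Suc k) * (real (Suc k) + a))"
    using assms by (simp add: field_simps)
  also have "\<dots> \<le> a / real (Suc k) ^ 2"
    using assms by (intro divide_left_mono) (auto simp: power2_eq_square)
  also have "\<dots> = a * (1 / (real k + 1) ^ 2)"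
    by simp
  finally show "norm (shHm_term j a k) \<le> real j * a * (1 / (real k + 1) ^ 2)"
    by (simp add: mult_left_mono mult.assoc)
qed

lemma shHm_term_0 [simp]: "shHm_term 0 a k = 0"
  by (simp add: shHm_term_def)

lemma shHm_term_Suc:
  assumes "g > 0"
  shows "shHm_term (Suc j) g m = (shHm_term j g m + g * shifted_recip g m 1 ^ Suc j) / (real m + 1)"
proof -
  define z where "z = 1 / (real m + 1)"
  define y where "y = shifted_recip g m 1"
  have shHm_term_eq: "shHm_term i g m = z ^ i - y ^ i" for i
    by (simp add: shHm_term_def z_def y_def shifted_recip_def power_one_over add_ac)
  have y_rel: "y * (real m + 1) = 1 - g * y"
    using assms by (simp add: y_def shifted_recip_def field_simps add_pos_nonneg)
  have "y ^ Suc j * (real m + 1) = y ^ j * (y * (real m + 1))"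
    by (simp add: algebra_simps)
  also have "\<dots> = y ^ j - g * y ^ Suc j"
    unfolding y_rel by (simp add: algebra_simps)
  finally have "y ^ Suc j = (y ^ j - g * y ^ Suc j) / (real m + 1)"
    by (simp add: eq_divide_eq)
  moreover have "z ^ Suc j = z ^ j / (real m + 1)"
    by (simp add: z_def)
  ultimately show ?thesis
    unfolding shHm_term_eq y_def[symmetric] by (simp add: diff_divide_distrib add_divide_distrib)
qed

lemma v_seq_row_sums:
  assumes "g > 0"
  shows "(\<lambda>n. v_seq g m e (Suc n)) sums shHm_term (Suc e) g m"
proof (induction e)
  case 0
  have "(\<lambda>n. (u_seq g m 0 (Suc n) - u_seq g m 0 (Suc (Suc n))) / (real m + 1))
      sums (u_seq g m 0 (Suc 0) / (real m + 1))"
    by (intro sums_divide u_seq_telescope_sums assms)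
  moreover have "u_seq g m 0 (Suc 0) / (real m + 1) = shHm_term 1 g m"
    using shHm_term_Suc[OF assms, of 0 m] by (simp add: u_seq_at_1)
  ultimately show ?case
    by (simp add: u_seq_0_diff_Suc[OF assms])
next
  case (Suc e)
  have "(\<lambda>n. ((u_seq g m (Suc e) (Suc n) - u_seq g m (Suc e) (Suc (Suc n))) + v_seq g m e (Suc n))
        / (real m + 1))
      sums ((u_seq g m (Suc e) (Suc 0) + shHm_term (Suc e) g m) / (real m + 1))"
    by (intro sums_divide sums_add u_seq_telescope_sums Suc.IH assms)
  then show ?case
    using assms by (simp add: u_seq_Suc_diff_Suc u_seq_at_1 shHm_term_Suc[of g "Suc e"] add_ac)
qed

lemma v_seq_column_sums:
  assumes "g > 0"
  shows "(\<lambda>m. v_seq g m e (Suc n)) sums (u_seq g 0 e (Suc n) / real (Suc n))"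
proof -
  have "(\<lambda>m. u_seq g m e (Suc n) - u_seq g (Suc m) e (Suc n)) sums (u_seq g 0 e (Suc n) - 0)"
    by (intro telescope_sums' u_seq_tendsto_0_shift assms) simp
  then have "(\<lambda>m. (u_seq g m e (Suc n) - u_seq g (Suc m) e (Suc n)) / real (Suc n))
      sums (u_seq g 0 e (Suc n) / real (Suc n))"
    by (intro sums_divide) simp
  then show ?thesis by (simp add: u_seq_diff_Suc_shift[OF assms] del: of_nat_Suc)
qed

lemma sums_swap_nonneg:
  fixes a :: "nat \<Rightarrow> nat \<Rightarrow> real"
  assumes nonneg: "\<And>m n. a m n \<ge> 0"
    and rows: "\<And>m. (\<lambda>n. a m n) sums s m"
    and "summable s"
  shows "(\<lambda>n. \<Sum>m. a m n) sums (\<Sum>m. s m)"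
proof -
  have row_summable: "summable (\<lambda>n. a m n)" and s_eq: "s m = (\<Sum>n. a m n)" for m
    using rows[of m] by (auto simp: sums_iff)
  have row_partial: "(\<Sum>n<N. a m n) \<le> s m" for m N
    unfolding s_eq using row_summable nonneg by (intro sum_le_suminf) auto
  have term_le: "a m n \<le> s m" for m n
  proof -
    have "a m n \<le> (\<Sum>i<Suc n. a m i)" using nonneg by (intro member_le_sum) auto
    also have "\<dots> \<le> s m" by (rule row_partial)
    finally show ?thesis .
  qed
  have col_summable: "summable (\<lambda>m. a m n)" for n
    using term_le nonneg by (intro summable_comparison_test'[OF \<open>summable s\<close>]) auto
  have col_partial: "(\<Sum>m<M. a m n) \<le> (\<Sum>m. a m n)" for M n
    using col_summable nonneg by (intro sum_le_suminf) auto
  define b where "b n = (\<Sum>m. a m n)" for n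
  have b_partial: "(\<Sum>n<N. b n) \<le> (\<Sum>m. s m)" for N
  proof -
    have "(\<Sum>n<N. b n) = (\<Sum>m. \<Sum>n<N. a m n)"
      unfolding b_def using col_summable by (simp add: suminf_sum)
    also have "\<dots> \<le> (\<Sum>m. s m)"
      using row_partial col_summable \<open>summable s\<close> by (intro suminf_le summable_sum) auto
    finally show ?thesis .
  qed
  have "summable b"
    using b_partial nonneg col_summable by (intro summableI_nonneg_bounded) (auto simp: b_def suminf_nonneg)
  have "(\<Sum>m<M. s m) \<le> suminf b" for M
  proof -
    have "(\<Sum>m<M. s m) = (\<Sum>n. \<Sum>m<M. a m n)"
      unfolding s_eq using row_summable by (simp add: suminf_sum)
    also have "\<dots> \<le> suminf b"
      using col_partial row_summable \<open>summable b\<close> by (intro suminf_le summable_sum) (auto simp: b_def)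
    finally show ?thesis .
  qed
  then have "(\<Sum>m. s m) \<le> suminf b" using \<open>summable s\<close> by (rule suminf_le_const[rotated])
  moreover have "suminf b \<le> (\<Sum>m. s m)" using \<open>summable b\<close> b_partial by (rule suminf_le_const)
  ultimately have "suminf b = (\<Sum>m. s m)" by linarith
  with summable_sums[OF \<open>summable b\<close>] show ?thesis by (simp add: b_def[abs_def])
qed

theorem complete_hom_series_sums_shHm:
  assumes "g > 0"
  shows "(\<lambda>n. g / (real (Suc n) * (g + real (Suc n))) * complete_hom (shifted_recip g 0) e (Suc n))
    sums shHm (Suc e) g"
proof -
  have "(\<lambda>n. \<Sum>m. v_seq g m e (Suc n)) sums (\<Sum>m. shHm_term (Suc e) g m)"
    using assms
    by (intro sums_swap_nonneg v_seq_nonneg v_seq_row_sums summable_shHm_term) auto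
  moreover have "(\<Sum>m. v_seq g m e (Suc n))
      = g / (real (Suc n) * (g + real (Suc n))) * complete_hom (shifted_recip g 0) e (Suc n)" for n
    using sums_unique[OF v_seq_column_sums[OF assms, of e n]] assms
    by (simp add: u_seq_def poch_ratio_left_0 mult.commute del: of_nat_Suc)
  ultimately show ?thesis by (simp add: shHm_eq_suminf)
qed

section \<open>The cubic and quartic harmonic combinations\<close>

lemma shHm_add_1:
  assumes "a \<ge> 0"
  shows "shHm (Suc e) (a + 1) = shHm (Suc e) a + 1 / (a + 1) ^ Suc e"
proof -
  define h where "h k = (1 / (real k + 1 + a)) ^ Suc e" for k :: nat
  have "h \<longlonglongrightarrow> 0" unfolding h_def using assms by real_asymp
  then have "(\<lambda>k. h (Suc k) - h k) sums (0 - h 0)" by (rule telescope_sums)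
  moreover have "shHm_term (Suc e) a k - shHm_term (Suc e) (a + 1) k = h (Suc k) - h k" for k
    by (simp add: shHm_term_def h_def power_one_over add_ac)
  moreover have "(\<lambda>k. shHm_term (Suc e) a k - shHm_term (Suc e) (a + 1) k)
      sums (shHm (Suc e) a - shHm (Suc e) (a + 1))"
    unfolding shHm_eq_suminf using assms by (intro sums_diff summable_sums summable_shHm_term) auto
  ultimately have "shHm (Suc e) a - shHm (Suc e) (a + 1) = 0 - h 0"
    using sums_unique2 by force
  then show ?thesis by (simp add: h_def power_one_over add_ac)
qed

lemma shHm_add_nat:
  assumes "g > 0"
  shows "shHm (Suc e) (g + real n) = shHm (Suc e) g + power_sum (shifted_recip g 0) (Suc e) n"
proof (induction n)
  case (Suc n)
  have "shHm (Suc e) (g + real (Suc n)) = shHm (Suc e) (g + real n) + 1 / (g + real n + 1) ^ Suc e"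
    using shHm_add_1[of "g + real n" e] assms by (simp add: add_ac)
  then show ?case using Suc by (simp add: shifted_recip_def power_one_over add_ac)
qed simp

lemma Cfun_add_nat:
  assumes "g > 0"
  shows "Cfun (g + real n) = Cfun g + 3 * (shH g ^ 2 + shHm 2 g) * complete_hom (shifted_recip g 0) 1 n
    + 6 * shH g * complete_hom (shifted_recip g 0) 2 n + 6 * complete_hom (shifted_recip g 0) 3 n"
proof -
  let ?p = "power_sum (shifted_recip g 0)"
  have "shH (g + real n) = shH g + ?p 1 n"
    using shHm_add_nat[OF assms, of 0 n] by (simp add: shH_eq_shHm_1)
  moreover have "shHm 2 (g + real n) = shHm 2 g + ?p 2 n"
    using shHm_add_nat[OF assms, of 1 n] by (simp add: numeral_2_eq_2)
  moreover have "shHm 3 (g + real n) = shHm 3 g + ?p 3 n"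
    using shHm_add_nat[OF assms, of 2 n] by (simp add: numeral_3_eq_3)
  ultimately show ?thesis
    unfolding Cfun_def complete_hom_1 complete_hom_2 complete_hom_3
    by (simp add: field_simps power2_eq_square power3_eq_cube)
qed

lemma Qfun_eq:
  "Qfun g = Cfun g * shH g + 3 * (shH g ^ 2 + shHm 2 g) * shHm 2 g + 6 * shH g * shHm 3 g
    + 6 * shHm 4 g"
  by (simp add: Qfun_def Cfun_def algebra_simps power2_eq_square power3_eq_cube eval_nat_numeral)

lemma Cfun_series_sums:
  assumes "g > 0"
  shows "(\<lambda>n. Cfun (g + real (Suc n)) / (real (Suc n) * (g + real (Suc n)))) sums (Qfun g / g)"
proof -
  define w where "w n = g / (real (Suc n) * (g + real (Suc n)))" for n
  define t where "t e n = w n * complete_hom (shifted_recip g 0) e (Suc n)" for e n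
  have t: "t e sums shHm (Suc e) g" for e
    unfolding t_def w_def by (rule complete_hom_series_sums_shHm[OF assms])
  have "(\<lambda>n. Cfun g * t 0 n + 3 * (shH g ^ 2 + shHm 2 g) * t 1 n + 6 * shH g * t 2 n + 6 * t 3 n)
      sums Qfun g"
    unfolding Qfun_eq
    using t[of 0] t[of 1] t[of 2] t[of 3]
    by (intro sums_add sums_mult) (simp_all add: shH_eq_shHm_1 eval_nat_numeral)
  moreover have "Cfun g * t 0 n + 3 * (shH g ^ 2 + shHm 2 g) * t 1 n + 6 * shH g * t 2 n + 6 * t 3 n
      = g * (Cfun (g + real (Suc n)) / (real (Suc n) * (g + real (Suc n))))" for n
  proof -
    have "Cfun g * t 0 n + 3 * (shH g ^ 2 + shHm 2 g) * t 1 n + 6 * shH g * t 2 n + 6 * t 3 n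
        = w n * Cfun (g + real (Suc n))"
      unfolding t_def Cfun_add_nat[OF assms]
      by (simp add: algebra_simps del: complete_hom.simps(2,3))
    then show ?thesis by (simp add: w_def)
  qed
  ultimately have "(\<lambda>n. g * (Cfun (g + real (Suc n)) / (real (Suc n) * (g + real (Suc n)))))
      sums Qfun g"
    by simp
  then have "(\<lambda>n. g * (Cfun (g + real (Suc n)) / (real (Suc n) * (g + real (Suc n)))) / g)
      sums (Qfun g / g)"
    by (rule sums_divide)
  then show ?thesis using assms by simp
qed

lemma Cfun_series_shifted_sums:
  fixes \<alpha> :: real and s :: nat
  assumes "real s < \<alpha>"
  shows "(\<lambda>n. Cfun (real (Suc n) + \<alpha>) / ((real (Suc n) + real s) * (real (Suc n) + \<alpha>)))
     sums (Qfun (\<alpha> - real s) / (\<alpha> - real s)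
           - (\<Sum>j=1..s. Cfun (\<alpha> + real j - real s) / (real j * (\<alpha> + real j - real s))))"
proof -
  define g where "g = \<alpha> - real s"
  define f where "f n = Cfun (g + real (Suc n)) / (real (Suc n) * (g + real (Suc n)))" for n
  have "f sums (Qfun g / g)"
    unfolding f_def using assms by (intro Cfun_series_sums) (simp add: g_def)
  then have "(\<lambda>n. f (n + s)) sums (Qfun g / g - (\<Sum>n<s. f n))"
    by (rule sums_split_initial_segment)
  moreover have "f (n + s) = Cfun (real (Suc n) + \<alpha>) / ((real (Suc n) + real s) * (real (Suc n) + \<alpha>))"
    for n by (simp add: f_def g_def algebra_simps)
  moreover have "(\<Sum>n<s. f n) = (\<Sum>j=1..s. Cfun (\<alpha> + real j - real s) / (real j * (\<alpha> + real j - real s)))"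
    by (simp add: sum.atLeast1_atMost_eq f_def g_def algebra_simps)
  ultimately show ?thesis by (simp add: g_def)
qed

lemma partial_fraction_split:
  fixes X a K R :: real
  assumes "a \<noteq> 0" "K \<noteq> 0" "R \<noteq> 0" "K \<noteq> R"
  shows "(K - a) / (K - R) * (X / (K * a)) + (a - R) / (K - R) * (X / (R * a)) = X / (R * K)"
proof -
  have "(K - a) / (K * a) + (a - R) / (R * a) = 1 / R - 1 / K"
    using assms by (simp add: field_simps)
  also have "\<dots> = (K - R) / (R * K)"
    using assms by (simp add: field_simps)
  finally have "(K - a) / (K * a) + (a - R) / (R * a) = (K - R) / (R * K)" .
  moreover have "(K - a) / (K - R) * (X / (K * a)) + (a - R) / (K - R) * (X / (R * a))
      = X / (K - R) * ((K - a) / (K * a) + (a - R) / (R * a))"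
    by (simp add: algebra_simps)
  ultimately show ?thesis using assms by simp
qed

theorem theorem2p7:
  fixes r k :: nat and \<alpha> :: real
  assumes "real k < \<alpha>" and "r < k"
  shows "(\<lambda>n. Cfun (real (Suc n) + \<alpha>) / ((real (Suc n) + real r) * (real (Suc n) + real k)))
    sums ((real k - \<alpha>) / (real k - real r) *
            (Qfun (\<alpha> - real k) / (\<alpha> - real k)
             - (\<Sum>j=1..k. Cfun (\<alpha> + real j - real k) / (real j * (\<alpha> + real j - real k))))
        + (\<alpha> - real r) / (real k - real r) *
            (Qfun (\<alpha> - real r) / (\<alpha> - real r)
             - (\<Sum>j=1..r. Cfun (\<alpha> + real j - real r) / (real j * (\<alpha> + real j - real r)))))"
proof -
  have "real r < \<alpha>" using assms by linarith
  let ?a = "\<lambda>n. real (Suc n) + \<alpha>" and ?K = "\<lambda>n. real (Suc n) + real k"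
    and ?R = "\<lambda>n. real (Suc n) + real r"
  have split: "(real k - \<alpha>) / (real k - real r) * (Cfun (?a n) / (?K n * ?a n))
      + (\<alpha> - real r) / (real k - real r) * (Cfun (?a n) / (?R n * ?a n))
      = Cfun (?a n) / (?R n * ?K n)" for n
    using partial_fraction_split[of "?a n" "?K n" "?R n" "Cfun (?a n)"] assms \<open>real r < \<alpha>\<close>
    by (simp add: add_pos_pos)
  show ?thesis
    unfolding split[symmetric]
    using assms \<open>real r < \<alpha>\<close> by (intro sums_add sums_mult Cfun_series_shifted_sums)
qed

end
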